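(* Let $p,n\in\mathbb N$ with $p\ge n\ge 7$, and let $G\in Ex(p;T_n^1)$. If $G$ is connected, then $\Delta(G)=n-4$ and $e(G)=\big[\tfrac{(n-4)p}{2}\big]$.
   Context: All graphs are finite and simple; a graph "contains" $H$ if it has a subgraph isomorphic to $H$. $[x]$ denotes the greatest integer not exceeding $x$; $e(G)$ is the number of edges and $\Delta(G)$ the maximum degree of $G$. For a graph $L$ and $p\in\mathbb N$, $ex(p;L)$ is the maximum number of edges in a graph on $p$ vertices containing no copy of $L$, and $Ex(p;L)$ is the set of graphs on $p$ vertices containing no copy of $L$ and having exactly $ex(p;L)$ edges. For $n\ge 5$, $T_n^1$ is the tree with vertex set $\{v_0,\ldots,v_{n-1}\}$ and edge set $\{v_0v_1,\ldots,v_0v_{n-3},\,v_{n-4}v_{n-2},\,v_{n-3}v_{n-1}\}$. *)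

theory Defs
  imports Main
begin

definition sgraph :: "'a set \<Rightarrow> 'a set set \<Rightarrow> bool" where
  "sgraph V E \<longleftrightarrow> finite V \<and> (\<forall>e\<in>E. \<exists>u v. e = {u, v} \<and> u \<noteq> v \<and> u \<in> V \<and> v \<in> V)"

definition contains :: "'a set \<Rightarrow> 'a set set \<Rightarrow> 'b set \<Rightarrow> 'b set set \<Rightarrow> bool" where
  "contains V E VH EH \<longleftrightarrow>
     (\<exists>f. inj_on f VH \<and> f ` VH \<subseteq> V \<and> (\<forall>e\<in>EH. f ` e \<in> E))"

definition ex_num :: "nat \<Rightarrow> 'b set \<Rightarrow> 'b set set \<Rightarrow> nat" where
  "ex_num p LV LE = Max {card E | E. sgraph {0..<p} E \<and> \<not> contains {0..<p} E LV LE}"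

definition in_Ex :: "nat \<Rightarrow> 'b set \<Rightarrow> 'b set set \<Rightarrow> 'a set \<Rightarrow> 'a set set \<Rightarrow> bool" where
  "in_Ex p LV LE V E \<longleftrightarrow> sgraph V E \<and> card V = p \<and> \<not> contains V E LV LE
      \<and> card E = ex_num p LV LE"

definition degree :: "'a set set \<Rightarrow> 'a \<Rightarrow> nat" where
  "degree E v = card {e \<in> E. v \<in> e}"

definition max_degree :: "'a set \<Rightarrow> 'a set set \<Rightarrow> nat" where
  "max_degree V E = Max (degree E ` V)"

definition connected_graph :: "'a set \<Rightarrow> 'a set set \<Rightarrow> bool" where
  "connected_graph V E \<longleftrightarrow> (\<forall>u\<in>V. \<forall>v\<in>V. (\<lambda>x y. {x, y} \<in> E)\<^sup>*\<^sup>* u v)"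

definition T1_verts :: "nat \<Rightarrow> nat set" where
  "T1_verts n = {0..<n}"

definition T1_edges :: "nat \<Rightarrow> nat set set" where
  "T1_edges n = {{0, i} | i. 1 \<le> i \<and> i \<le> n - 3} \<union> {{n - 4, n - 2}, {n - 3, n - 1}}"

end

theory Submission
  imports Defs
begin

text \<open>
  The proof has three parts.
  (1) Lower bound: a circulant graph on p vertices with maximum degree n - 4 and
      [(n-4)p/2] edges contains no T_n^1, since the centre of T_n^1 has degree n - 3.
  (2) Upper bound on \<Delta>: in an extremal graph, any set S of fewer than n vertices is met by
      at least |S| choose 2 edges, for otherwise replacing these edges by a clique on S
      gives a larger T_n^1-free graph. Let v have maximum degree d with neighbourhood N.
      For d \<ge> n - 1, d = n - 2 and d = n - 3 we locate a set S of n - 1 or fewer vertices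
      around v met by too few edges; the edges that could meet S are controlled because
      T_n^1 (a star at v with two pendant edges) must not appear.
  (3) The handshake lemma gives 2e(G) \<le> p \<Delta>(G) \<le> p(n-4), and the lower bound squeezes
      both \<Delta>(G) and e(G) to their claimed values.
\<close>

definition neighbours :: "'a set set \<Rightarrow> 'a \<Rightarrow> 'a set" where
  "neighbours E v = {u. {v, u} \<in> E}"

definition touching :: "'a set set \<Rightarrow> 'a set \<Rightarrow> 'a set set" where
  "touching E S = {e \<in> E. e \<inter> S \<noteq> {}}"

lemma sgraph_edge:
  "sgraph V E \<Longrightarrow> e \<in> E \<Longrightarrow> \<exists>x y. e = {x, y} \<and> x \<noteq> y \<and> x \<in> V \<and> y \<in> V"
  by (auto simp: sgraph_def)

lemma sgraph_edge_ends: "sgraph V E \<Longrightarrow> {x, y} \<in> E \<Longrightarrow> x \<noteq> y \<and> x \<in> V \<and> y \<in> V"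
  unfolding sgraph_def by (metis doubleton_eq_iff insertI1)

lemma sgraph_finite_edges: "sgraph V E \<Longrightarrow> finite E"
proof -
  assume s: "sgraph V E"
  then have "E \<subseteq> Pow V" and "finite V" by (auto simp: sgraph_def)
  then show ?thesis by (meson finite_Pow_iff finite_subset)
qed

lemma sgraph_other_end:
  assumes s: "sgraph V E" and e: "e \<in> E" and se: "s \<in> e"
  shows "\<exists>t. e = {s, t} \<and> t \<noteq> s \<and> t \<in> V"
proof -
  obtain x y where xy: "e = {x, y}" "x \<noteq> y" "x \<in> V" "y \<in> V"
    using sgraph_edge[OF s e] by blast
  show ?thesis
  proof (cases "s = x")
    case True then show ?thesis using xy by blast
  next
    case False then have "s = y" using xy se by blast
    then show ?thesis using xy by (intro exI[of _ x]) (auto simp: insert_commute)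
  qed
qed

lemma neighbours_subset: "sgraph V E \<Longrightarrow> neighbours E v \<subseteq> V"
  by (auto simp: neighbours_def dest: sgraph_edge_ends)

lemma not_own_neighbour: "sgraph V E \<Longrightarrow> v \<notin> neighbours E v"
  using sgraph_edge_ends[of V E v v] by (auto simp: neighbours_def)

lemma card_neighbours:
  assumes s: "sgraph V E"
  shows "card (neighbours E v) = degree E v"
proof -
  have "bij_betw (\<lambda>u. {v, u}) (neighbours E v) {e \<in> E. v \<in> e}"
  proof (rule bij_betwI')
    fix x y assume "x \<in> neighbours E v" "y \<in> neighbours E v"
    then have "x \<noteq> v" "y \<noteq> v" using s by (auto simp: neighbours_def dest: sgraph_edge_ends)
    then show "({v, x} = {v, y}) = (x = y)" by (metis doubleton_eq_iff)
  next
    fix e assume "e \<in> {e \<in> E. v \<in> e}"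
    then show "\<exists>x \<in> neighbours E v. e = {v, x}"
      using sgraph_other_end[OF s] by (fastforce simp: neighbours_def)
  qed (auto simp: neighbours_def)
  then show ?thesis by (simp add: degree_def bij_betw_same_card)
qed

lemma degree_outside: "sgraph V E \<Longrightarrow> u \<notin> V \<Longrightarrow> degree E u = 0"
proof -
  assume "sgraph V E" "u \<notin> V"
  then have "{e \<in> E. u \<in> e} = {}" by (auto dest: sgraph_edge)
  then show ?thesis unfolding degree_def by (metis card.empty)
qed

lemma degree_sum:
  assumes s: "sgraph V E"
  shows "(\<Sum>u\<in>V. degree E u) = 2 * card E"
proof -
  have fV: "finite V" using s by (simp add: sgraph_def)
  have "(\<Sum>u\<in>V. degree E u) = (\<Sum>u\<in>V. \<Sum>e\<in>E. if u \<in> e then 1 else 0)"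
    unfolding degree_def using sgraph_finite_edges[OF s] by (simp add: sum.inter_filter[symmetric])
  also have "\<dots> = (\<Sum>e\<in>E. \<Sum>u\<in>V. if u \<in> e then 1 else 0)" by (rule sum.swap)
  also have "\<dots> = (\<Sum>e\<in>E. 2)"
  proof (rule sum.cong[OF refl])
    fix e assume "e \<in> E"
    then obtain x y where xy: "e = {x, y}" "x \<noteq> y" "x \<in> V" "y \<in> V"
      using sgraph_edge[OF s] by blast
    then have "{u \<in> V. u \<in> e} = {x, y}" by auto
    then show "(\<Sum>u\<in>V. if u \<in> e then 1 else 0) = (2::nat)"
      using fV xy(2) by (simp add: sum.inter_filter[symmetric])
  qed
  finally show ?thesis by simp
qed

lemma card_edges_within:
  assumes s: "sgraph V E" and X: "X \<subseteq> V"
  shows "card {e \<in> E. e \<subseteq> X} \<le> card X choose 2"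
proof -
  have fX: "finite X" using s X by (auto simp: sgraph_def intro: finite_subset)
  have "{e \<in> E. e \<subseteq> X} \<subseteq> {B. B \<subseteq> X \<and> card B = 2}"
    using s by (auto simp: sgraph_def)
  then have "card {e \<in> E. e \<subseteq> X} \<le> card {B. B \<subseteq> X \<and> card B = 2}"
    by (rule card_mono[rotated]) (simp add: fX)
  also have "\<dots> = card X choose 2" using n_subsets[OF fX] by simp
  finally show ?thesis .
qed

lemma connected_graph_crossing_edge:
  assumes c: "connected_graph V E" and u: "u \<in> A" and AV: "A \<subseteq> V"
    and w: "w \<in> V" "w \<notin> A"
  shows "\<exists>s t. {s, t} \<in> E \<and> s \<in> A \<and> t \<notin> A"
proof -
  have "(\<lambda>x y. {x, y} \<in> E)\<^sup>*\<^sup>* u w" using c u AV w by (auto simp: connected_graph_def)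
  then show ?thesis using w(2)
  proof (induction rule: rtranclp_induct)
    case base then show ?case using u by simp
  next
    case (step y z) then show ?case by (cases "y \<in> A") auto
  qed
qed

lemma max_degree_attained:
  assumes s: "sgraph V E" and ne: "V \<noteq> {}"
  shows "\<exists>v\<in>V. degree E v = max_degree V E"
proof -
  have "finite V" using s by (simp add: sgraph_def)
  then have "max_degree V E \<in> degree E ` V" using ne by (simp add: max_degree_def)
  then show ?thesis by auto
qed

lemma degree_le_max_degree: "sgraph V E \<Longrightarrow> u \<in> V \<Longrightarrow> degree E u \<le> max_degree V E"
  by (simp add: max_degree_def sgraph_def)

lemma edges_le_max_degree:
  assumes s: "sgraph V E"
  shows "2 * card E \<le> card V * max_degree V E"
proof -
  have "2 * card E = (\<Sum>u\<in>V. degree E u)" using degree_sum[OF s] by simp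
  also have "\<dots> \<le> card V * max_degree V E"
    using sum_bounded_above[of V "degree E" "max_degree V E"] degree_le_max_degree[OF s]
    by (cases "V = {}") auto
  finally show ?thesis .
qed

lemma sgraph_relabel:
  assumes s: "sgraph V E" and g: "inj_on g V"
  shows "sgraph (g ` V) ((\<lambda>e. g ` e) ` E)"
  unfolding sgraph_def
proof (intro conjI ballI)
  show "finite (g ` V)" using s by (simp add: sgraph_def)
  fix e assume "e \<in> (\<lambda>e. g ` e) ` E"
  then obtain e0 where e0: "e0 \<in> E" "e = g ` e0" by auto
  then obtain x y where "e0 = {x, y}" "x \<noteq> y" "x \<in> V" "y \<in> V"
    using sgraph_edge[OF s] by blast
  then show "\<exists>u v. e = {u, v} \<and> u \<noteq> v \<and> u \<in> g ` V \<and> v \<in> g ` V"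
    using e0 g by (auto dest: inj_onD)
qed

lemma contains_relabel:
  assumes s: "sgraph V E" and g: "inj_on g V"
    and c: "contains (g ` V) ((\<lambda>e. g ` e) ` E) LV LE"
  shows "contains V E LV LE"
proof -
  obtain f where f: "inj_on f LV" "f ` LV \<subseteq> g ` V" and fe: "\<forall>e\<in>LE. f ` e \<in> (\<lambda>e. g ` e) ` E"
    using c by (auto simp: contains_def)
  define h where "h = the_inv_into V g \<circ> f"
  have inv_image: "\<And>X. X \<subseteq> V \<Longrightarrow> the_inv_into V g ` g ` X = X"
    using g by (auto simp: image_comp the_inv_into_f_f subset_iff)
  have "inj_on h LV" unfolding h_def
    using f g by (metis comp_inj_on inj_on_subset inj_on_the_inv_into)
  moreover have "h ` LV \<subseteq> V"
    using f g by (auto simp: h_def the_inv_into_into)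
  moreover have "h ` e \<in> E" if e: "e \<in> LE" for e
  proof -
    obtain e0 where e0: "e0 \<in> E" "f ` e = g ` e0" using fe e by auto
    have "e0 \<subseteq> V" using s e0(1) by (auto dest: sgraph_edge)
    have "h ` e = the_inv_into V g ` f ` e" by (simp add: h_def image_comp)
    then have "h ` e = e0" using inv_image \<open>e0 \<subseteq> V\<close> e0(2) by simp
    then show ?thesis using e0 by simp
  qed
  ultimately show ?thesis by (auto simp: contains_def)
qed

text \<open>ex(p;L) bounds the size of every L-free graph on p vertices, whatever its vertex type:
  relabel the vertices by 0, ..., p-1.\<close>
lemma ex_num_upper:
  assumes s: "sgraph V E" and cV: "card V = p" and nc: "\<not> contains V E LV LE"
  shows "card E \<le> ex_num p LV LE"
proof -
  have fV: "finite V" using s by (simp add: sgraph_def)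
  obtain g where g: "bij_betw g V {0..<p}" using ex_bij_betw_finite_nat[OF fV] cV by auto
  then have ginj: "inj_on g V" and gV: "g ` V = {0..<p}" by (auto simp: bij_betw_def)
  define E' where "E' = (\<lambda>e. g ` e) ` E"
  have "\<forall>e\<in>E. e \<subseteq> V" using s by (auto simp: sgraph_def)
  then have "inj_on (\<lambda>e. g ` e) E"
    using ginj by (intro inj_onI) (metis inj_on_image_eq_iff)
  then have "card E' = card E" by (simp add: E'_def card_image)
  moreover have "sgraph {0..<p} E'" using sgraph_relabel[OF s ginj] gV by (simp add: E'_def)
  moreover have "\<not> contains {0..<p} E' LV LE"
    using contains_relabel[OF s ginj] nc gV by (auto simp: E'_def)
  moreover have "finite {card E | E. sgraph {0..<p} E \<and> \<not> contains {0..<p} E LV LE}"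
  proof -
    have "{E. sgraph {0..<p} E} \<subseteq> Pow (Pow {0..<p})" by (auto simp: sgraph_def)
    then have "finite {E. sgraph {0..<p} E}" by (meson finite_Pow_iff finite_atLeastLessThan finite_subset)
    then show ?thesis by (simp add: setcompr_eq_image)
  qed
  ultimately show ?thesis unfolding ex_num_def by (metis (mono_tags, lifting) Max_ge mem_Collect_eq)
qed

lemma T1_centre_edge: "1 \<le> i \<Longrightarrow> i \<le> n - 3 \<Longrightarrow> {0, i} \<in> T1_edges n"
  by (auto simp: T1_edges_def)

text \<open>T_n^1 is connected: a property preserved along its edges holds everywhere or nowhere.\<close>
lemma T1_connected:
  assumes n: "n \<ge> 5" and along: "\<And>i j. {i, j} \<in> T1_edges n \<Longrightarrow> P i \<longleftrightarrow> P j" and i: "i < n"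
  shows "P i \<longleftrightarrow> P 0"
proof -
  have centre: "P i \<longleftrightarrow> P 0" if "1 \<le> i" "i \<le> n - 3" for i
    using along[OF T1_centre_edge[OF that]] by blast
  have "P (n-2) \<longleftrightarrow> P (n-4)" "P (n-1) \<longleftrightarrow> P (n-3)"
    using along[of "n-4" "n-2"] along[of "n-3" "n-1"] by (auto simp: T1_edges_def insert_commute)
  moreover have "i = 0 \<or> (1 \<le> i \<and> i \<le> n - 3) \<or> i = n - 2 \<or> i = n - 1" using i by linarith
  ultimately show ?thesis using centre[of "n-4"] centre[of "n-3"] centre[of i] n by auto
qed

text \<open>The centre of T_n^1 has degree n - 3, so a copy of T_n^1 needs a vertex of degree
  at least n - 3.\<close>
lemma contains_T1_high_degree:
  assumes s: "sgraph V E" and n: "n \<ge> 4" and c: "contains V E (T1_verts n) (T1_edges n)"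
  shows "\<exists>u\<in>V. degree E u \<ge> n - 3"
proof -
  obtain f where inj: "inj_on f {0..<n}" and im: "f ` {0..<n} \<subseteq> V"
    and ed: "\<forall>e\<in>T1_edges n. f ` e \<in> E"
    using c by (auto simp: contains_def T1_verts_def)
  have "(\<lambda>i. {f 0, f i}) ` {1..n-3} \<subseteq> {e \<in> E. f 0 \<in> e}"
    using ed T1_centre_edge by fastforce
  moreover have "inj_on (\<lambda>i. {f 0, f i}) {1..n-3}"
  proof (rule inj_onI)
    fix i j assume i: "i \<in> {1..n-3}" and j: "j \<in> {1..n-3}" and eq: "{f 0, f i} = {f 0, f j}"
    have "f i \<noteq> f 0" "f j \<noteq> f 0" using inj i j n by (auto dest: inj_onD)
    then have "f i = f j" using eq by (metis doubleton_eq_iff)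
    then show "i = j" using inj i j n by (auto dest: inj_onD)
  qed
  moreover have "finite {e \<in> E. f 0 \<in> e}" using sgraph_finite_edges[OF s] by simp
  ultimately have "card {1..n-3} \<le> card {e \<in> E. f 0 \<in> e}"
    by (metis card_image card_mono)
  moreover have "f 0 \<in> V" using im n by auto
  ultimately show ?thesis by (auto simp: degree_def)
qed

lemma T1_copy:
  assumes "inj_on f {0..<n}" "f ` {0..<n} \<subseteq> V"
    and "\<And>i. 1 \<le> i \<Longrightarrow> i \<le> n - 3 \<Longrightarrow> {f 0, f i} \<in> E"
    and "{f (n-4), f (n-2)} \<in> E" "{f (n-3), f (n-1)} \<in> E"
  shows "contains V E (T1_verts n) (T1_edges n)"
proof -
  have "f ` e \<in> E" if "e \<in> T1_edges n" for e
    using that assms(3-5) by (auto simp: T1_edges_def)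
  then show ?thesis using assms(1,2) by (auto simp: contains_def T1_verts_def)
qed

lemma T1_embedding:
  assumes s: "sgraph V E" and n: "n \<ge> 7" and v: "v \<in> V"
    and a: "a \<in> neighbours E v" and b: "b \<in> neighbours E v"
    and ax: "{a, x} \<in> E" and by': "{b, y} \<in> E" and d: "distinct [v, a, b, x, y]"
    and R: "card (neighbours E v - {a, b, x, y}) \<ge> n - 5"
  shows "contains V E (T1_verts n) (T1_edges n)"
proof -
  define N where "N = neighbours E v"
  define R where "R = N - {a, b, x, y}"
  have NV: "N \<subseteq> V" using neighbours_subset[OF s] by (simp add: N_def)
  have fR: "finite R" using NV s finite_subset by (auto simp: R_def sgraph_def)
  obtain g where gR: "g ` {1..n-5} \<subseteq> R" and gi: "inj_on g {1..n-5}"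
    using card_le_inj[of "{1..n-5}" R] fR R by (auto simp: R_def N_def)
  define f where "f = (\<lambda>i. if i = 0 then v else if i \<le> n-5 then g i else if i = n-4 then a
     else if i = n-3 then b else if i = n-2 then x else y)"
  define L where "L = {1..n-5}"
  define T where "T = {0, n-4, n-3, n-2, n-1}"
  have f_ends: "f 0 = v" "f (n-4) = a" "f (n-3) = b" "f (n-2) = x" "f (n-1) = y"
    using n by (auto simp: f_def)
  have f_leaves: "f i = g i" if "i \<in> L" for i using that by (simp add: f_def L_def)
  have dom: "{0..<n} = L \<union> T" using n by (auto simp: L_def T_def)
  have fL: "f ` L \<subseteq> R" using gR f_leaves by (auto simp: L_def)
  have fT: "f ` T = {v, a, b, x, y}" using f_ends by (simp add: T_def)
  have vR: "v \<notin> R" using not_own_neighbour[OF s, of v] by (simp add: R_def N_def)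
  have "inj_on f L" using gi inj_on_cong[of L f g] f_leaves by (simp add: L_def)
  moreover have "inj_on f T"
  proof -
    have "map f [0, n-4, n-3, n-2, n-1] = [v, a, b, x, y]" using f_ends by simp
    then have "distinct (map f [0, n-4, n-3, n-2, n-1])" using d by metis
    then have "inj_on f (set [0, n-4, n-3, n-2, n-1])" by (simp only: distinct_map)
    then show ?thesis by (simp only: T_def list.set)
  qed
  moreover have "f ` L \<inter> f ` T = {}" using fL fT vR by (auto simp: R_def)
  ultimately have "inj_on f {0..<n}" unfolding dom by (auto simp: inj_on_Un)
  moreover have "f ` {0..<n} \<subseteq> V"
    using fL fT NV v a b s ax by' by (auto simp: dom R_def N_def dest: sgraph_edge_ends)
  moreover have "{f 0, f i} \<in> E" if "1 \<le> i" "i \<le> n-3" for i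
  proof -
    have "i \<in> L \<or> i = n-4 \<or> i = n-3" using that by (auto simp: L_def)
    then have "f i \<in> N" using fL f_ends a b by (auto simp: R_def N_def)
    then show ?thesis using f_ends by (simp add: N_def neighbours_def)
  qed
  ultimately show ?thesis by (rule T1_copy) (simp_all only: f_ends ax by')
qed

section \<open>The lower bound construction\<close>

text \<open>Addition modulo p of a residue i < p and a step j \<le> p.\<close>
definition cyc_add :: "nat \<Rightarrow> nat \<Rightarrow> nat \<Rightarrow> nat" where
  "cyc_add p i j = (if i + j < p then i + j else i + j - p)"

text \<open>The extremal construction on {0, ..., p-1}: each i is joined to i+1, ..., i+h (mod p),
  the chords of the circulant graph; for odd k one adds the p div 2 diameters i, i + p div 2.\<close>
definition chord_edges :: "nat \<Rightarrow> nat \<Rightarrow> nat set set" where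
  "chord_edges p h = (\<lambda>(i, j). {i, cyc_add p i j}) ` ({0..<p} \<times> {1..h})"

definition diameter_edges :: "nat \<Rightarrow> nat set set" where
  "diameter_edges p = (\<lambda>i. {i, i + p div 2}) ` {0..<p div 2}"

definition circulant_edges :: "nat \<Rightarrow> nat \<Rightarrow> nat set set" where
  "circulant_edges p k =
     chord_edges p (k div 2) \<union> (if odd k then diameter_edges p else {})"

lemma cyc_add_inj: "i < p \<Longrightarrow> j < p \<Longrightarrow> j' < p \<Longrightarrow> cyc_add p i j = cyc_add p i j' \<Longrightarrow> j = j'"
  unfolding cyc_add_def by (simp split: if_splits)

lemma cyc_add_no_swap:
  "i < p \<Longrightarrow> i' < p \<Longrightarrow> 1 \<le> j \<Longrightarrow> 1 \<le> j' \<Longrightarrow> j + j' < p \<Longrightarrow> i = cyc_add p i' j' \<Longrightarrow>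
   cyc_add p i j = i' \<Longrightarrow> False"
  unfolding cyc_add_def by (simp split: if_splits)

lemma cyc_add_inverse: "i < p \<Longrightarrow> j \<le> p \<Longrightarrow> u = cyc_add p i j \<Longrightarrow> i = (if j \<le> u then u - j else u + p - j)"
  unfolding cyc_add_def by (auto split: if_splits)

lemma cyc_add_not_diameter:
  "i < p \<Longrightarrow> i' < p div 2 \<Longrightarrow> 1 \<le> j \<Longrightarrow> j + 2 \<le> p div 2 \<Longrightarrow>
   \<not> ((i = i' \<and> cyc_add p i j = i' + p div 2) \<or> (i = i' + p div 2 \<and> cyc_add p i j = i'))"
  unfolding cyc_add_def by (auto split: if_splits)

lemma card_chord_edges:
  assumes "2 * h < p"
  shows "card (chord_edges p h) = p * h"
proof -
  have "inj_on (\<lambda>(i, j). {i, cyc_add p i j}) ({0..<p} \<times> {1..h})"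
  proof (rule inj_onI)
    fix x y assume x: "x \<in> {0..<p} \<times> {1..h}" and y: "y \<in> {0..<p} \<times> {1..h}"
      and xy: "(\<lambda>(i, j). {i, cyc_add p i j}) x = (\<lambda>(i, j). {i, cyc_add p i j}) y"
    obtain i j i' j' where ij: "x = (i, j)" "y = (i', j')" by fastforce
    have a: "i < p" "1 \<le> j" "j \<le> h" "i' < p" "1 \<le> j'" "j' \<le> h" using x y ij by auto
    from xy ij have "(i = i' \<and> cyc_add p i j = cyc_add p i' j') \<or> (i = cyc_add p i' j' \<and> cyc_add p i j = i')"
      by (simp add: doubleton_eq_iff)
    then show "x = y"
      using cyc_add_inj[of i p j j'] cyc_add_no_swap[of i p i' j j'] a assms ij by auto
  qed
  then show ?thesis by (simp add: chord_edges_def card_image card_cartesian_product)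
qed

lemma card_diameter_edges: "card (diameter_edges p) = p div 2"
proof -
  have "inj_on (\<lambda>i. {i, i + p div 2}) {0..<p div 2}"
    by (rule inj_onI) (auto simp: doubleton_eq_iff)
  then show ?thesis by (simp add: diameter_edges_def card_image)
qed

lemma card_circulant_edges:
  assumes kp: "k + 4 \<le> p"
  shows "card (circulant_edges p k) = k * p div 2"
proof -
  have disj: "chord_edges p (k div 2) \<inter> diameter_edges p = {}"
  proof (rule ccontr)
    assume "chord_edges p (k div 2) \<inter> diameter_edges p \<noteq> {}"
    then obtain i j i' where a: "i < p" "1 \<le> j" "j \<le> k div 2" "i' < p div 2"
      and eq: "{i, cyc_add p i j} = {i', i' + p div 2}"
      by (auto simp: chord_edges_def diameter_edges_def)
    then show False
      using cyc_add_not_diameter[of i p i' j] kp by (simp add: doubleton_eq_iff)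
  qed
  have fin: "finite (chord_edges p (k div 2))" "finite (diameter_edges p)"
    by (simp_all add: chord_edges_def diameter_edges_def)
  have "card (circulant_edges p k) =
      card (chord_edges p (k div 2)) + (if odd k then card (diameter_edges p) else 0)"
    using card_Un_disjoint[OF fin disj] by (simp add: circulant_edges_def)
  also have "\<dots> = p * (k div 2) + (if odd k then p div 2 else 0)"
    using card_chord_edges[of "k div 2" p] card_diameter_edges[of p] kp by simp
  also have "\<dots> = k * p div 2"
  proof (cases "odd k")
    case True
    then obtain h where "k = 2 * h + 1" by (blast elim: oddE)
    then show ?thesis by (simp add: algebra_simps)
  next
    case False
    then obtain h where "k = 2 * h" by (blast elim: evenE)
    then show ?thesis by simp
  qed
  finally show ?thesis .
qed

lemma circulant_sgraph:
  assumes kp: "k + 4 \<le> p"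
  shows "sgraph {0..<p} (circulant_edges p k)"
  unfolding sgraph_def
proof (intro conjI ballI)
  fix e assume "e \<in> circulant_edges p k"
  then consider (chord) i j where "i < p" "1 \<le> j" "j \<le> k div 2" "e = {i, cyc_add p i j}"
    | (diameter) i where "i < p div 2" "e = {i, i + p div 2}"
    by (auto simp: circulant_edges_def chord_edges_def diameter_edges_def split: if_splits)
  then show "\<exists>u v. e = {u, v} \<and> u \<noteq> v \<and> u \<in> {0..<p} \<and> v \<in> {0..<p}"
  proof cases
    case chord
    have "j < p" "1 \<le> j" using chord(2,3) kp by linarith+
    then have "cyc_add p i j < p" "cyc_add p i j \<noteq> i" using chord(1) by (auto simp: cyc_add_def)
    then show ?thesis using chord by (intro exI[of _ i] exI[of _ "cyc_add p i j"]) auto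
  next
    case diameter
    have "2 * (p div 2) \<le> p" by simp
    then have "i + p div 2 < p" "i \<noteq> i + p div 2" using diameter(1) kp by linarith+
    then show ?thesis using diameter by (intro exI[of _ i] exI[of _ "i + p div 2"]) auto
  qed
qed simp

lemma circulant_edge_at:
  assumes kp: "k + 4 \<le> p" and e: "e \<in> circulant_edges p k" "u \<in> e"
  shows "e \<in> (\<lambda>j. {u, cyc_add p u j}) ` {1..k div 2}
    \<union> (\<lambda>j. {if j \<le> u then u - j else u + p - j, u}) ` {1..k div 2}
    \<union> (if odd k then {if u < p div 2 then {u, u + p div 2} else {u - p div 2, u}} else {})"
proof -
  from e(1) consider (chord) i j where "i < p" "1 \<le> j" "j \<le> k div 2" "e = {i, cyc_add p i j}"
    | (diameter) i where "odd k" "i < p div 2" "e = {i, i + p div 2}"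
    by (auto simp: circulant_edges_def chord_edges_def diameter_edges_def split: if_splits)
  then show ?thesis
  proof cases
    case chord
    have "u = i \<or> u = cyc_add p i j" using e(2) chord by auto
    then show ?thesis
    proof
      assume "u = i"
      then show ?thesis using chord by auto
    next
      assume u_end: "u = cyc_add p i j"
      have "j \<le> p" using chord kp by linarith
      then have "i = (if j \<le> u then u - j else u + p - j)"
        using cyc_add_inverse[OF chord(1) _ u_end] by blast
      then show ?thesis using chord u_end by auto
    qed
  next
    case diameter
    then have "u = i \<or> u = i + p div 2" using e(2) by auto
    then show ?thesis using diameter by auto
  qed
qed

text \<open>Hence every vertex lies on k div 2 chords in each direction and on at most one
  diameter.\<close>
lemma circulant_degree_le:
  assumes kp: "k + 4 \<le> p"
  shows "degree (circulant_edges p k) u \<le> k"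
proof -
  define h where "h = k div 2"
  define fwd where "fwd = (\<lambda>j. {u, cyc_add p u j}) ` {1..h}"
  define bwd where "bwd = (\<lambda>j. {if j \<le> u then u - j else u + p - j, u}) ` {1..h}"
  define D where
    "D = (if odd k then {if u < p div 2 then {u, u + p div 2} else {u - p div 2, u}} else {})"
  have "{e \<in> circulant_edges p k. u \<in> e} \<subseteq> fwd \<union> bwd \<union> D"
  proof
    fix e assume "e \<in> {e \<in> circulant_edges p k. u \<in> e}"
    then show "e \<in> fwd \<union> bwd \<union> D"
      unfolding fwd_def bwd_def D_def h_def by (intro circulant_edge_at[OF kp]) simp_all
  qed
  then have "degree (circulant_edges p k) u \<le> card (fwd \<union> bwd \<union> D)"
    unfolding degree_def by (rule card_mono[rotated]) (simp add: fwd_def bwd_def D_def)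
  also have "\<dots> \<le> card fwd + card bwd + card D"
    by (meson card_Un_le add_le_mono order_trans le_refl)
  also have "\<dots> \<le> h + h + (if odd k then 1 else 0)"
  proof -
    have "card fwd \<le> h" "card bwd \<le> h" unfolding fwd_def bwd_def
      by (metis card_atLeastAtMost card_image_le finite_atLeastAtMost diff_Suc_1)+
    then show ?thesis by (simp add: D_def)
  qed
  also have "\<dots> = k" unfolding h_def by presburger
  finally show ?thesis .
qed

text \<open>Lower bound: the circulant graph has maximum degree at most n - 4, hence contains
  no T_n^1, and it has [(n-4)p/2] edges.\<close>
lemma ex_num_lower:
  assumes n: "n \<ge> 7" and p: "p \<ge> n"
  shows "(n - 4) * p div 2 \<le> ex_num p (T1_verts n) (T1_edges n)"
proof -
  have kp: "n - 4 + 4 \<le> p" using n p by simp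
  note s = circulant_sgraph[OF kp]
  have nc: "\<not> contains {0..<p} (circulant_edges p (n - 4)) (T1_verts n) (T1_edges n)"
  proof
    assume "contains {0..<p} (circulant_edges p (n - 4)) (T1_verts n) (T1_edges n)"
    then obtain u where "u \<in> {0..<p}" "degree (circulant_edges p (n - 4)) u \<ge> n - 3"
      using contains_T1_high_degree[OF s, of n] n by auto
    then show False using circulant_degree_le[OF kp, of u] n by auto
  qed
  then show ?thesis using ex_num_upper[OF s _ nc] card_circulant_edges[OF kp] by simp
qed

section \<open>Clique replacement in extremal graphs\<close>

definition clique_replace :: "'a set set \<Rightarrow> 'a set \<Rightarrow> 'a set set" where
  "clique_replace E S = {e \<in> E. e \<inter> S = {}} \<union> {B. B \<subseteq> S \<and> card B = 2}"

lemma clique_replace_sgraph: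
  assumes s: "sgraph V E" and SV: "S \<subseteq> V"
  shows "sgraph V (clique_replace E S)"
  unfolding sgraph_def
proof (intro conjI ballI)
  show "finite V" using s by (simp add: sgraph_def)
  fix e assume e: "e \<in> clique_replace E S"
  show "\<exists>x y. e = {x, y} \<and> x \<noteq> y \<and> x \<in> V \<and> y \<in> V"
  proof (cases "e \<in> E")
    case True then show ?thesis using sgraph_edge[OF s] by blast
  next
    case False
    then obtain x y where "e = {x, y}" "x \<noteq> y" "e \<subseteq> S"
      using e by (auto simp: clique_replace_def card_2_iff)
    then show ?thesis using SV by blast
  qed
qed

lemma clique_replace_no_crossing:
  "{a, b} \<in> clique_replace E S \<Longrightarrow> a \<in> S \<longleftrightarrow> b \<in> S"
  by (auto simp: clique_replace_def)

lemma card_clique_replace: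
  assumes s: "sgraph V E" and SV: "S \<subseteq> V"
  shows "card (clique_replace E S) + card (touching E S) = card E + (card S choose 2)"
proof -
  have fE: "finite E" using sgraph_finite_edges[OF s] .
  have fS: "finite S" using s SV by (auto simp: sgraph_def intro: finite_subset)
  define K where "K = {B. B \<subseteq> S \<and> card B = 2}"
  define E0 where "E0 = {e \<in> E. e \<inter> S = {}}"
  have "E0 \<inter> K = {}" by (auto simp: E0_def K_def card_2_iff)
  then have "card (clique_replace E S) = card E0 + card K"
    using fE fS by (simp add: clique_replace_def E0_def K_def card_Un_disjoint)
  moreover have "card E = card E0 + card (touching E S)"
  proof -
    have "E = E0 \<union> touching E S" "E0 \<inter> touching E S = {}"
      by (auto simp: E0_def touching_def)
    then show ?thesis using fE card_Un_disjoint[of E0 "touching E S"]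
      by (simp add: E0_def touching_def)
  qed
  moreover have "card K = card S choose 2" using n_subsets[OF fS] by (simp add: K_def)
  ultimately show ?thesis by simp
qed

text \<open>Since T_n^1 is connected and has n vertices, for |S| < n a copy of T_n^1 in the new
  graph lies entirely outside S and hence already in the old graph.\<close>
lemma clique_replace_T1_free:
  assumes n: "n \<ge> 5" and fS: "finite S" and cS: "card S < n"
    and nc: "\<not> contains V E (T1_verts n) (T1_edges n)"
  shows "\<not> contains V (clique_replace E S) (T1_verts n) (T1_edges n)"
proof
  assume "contains V (clique_replace E S) (T1_verts n) (T1_edges n)"
  then obtain f where fi: "inj_on f {0..<n}" and fim: "f ` {0..<n} \<subseteq> V"
    and fe: "\<forall>e\<in>T1_edges n. f ` e \<in> clique_replace E S"
    by (auto simp: contains_def T1_verts_def)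
  have all: "f i \<in> S \<longleftrightarrow> f 0 \<in> S" if "i < n" for i
  proof (rule T1_connected[OF n _ that])
    fix i j assume "{i, j} \<in> T1_edges n"
    then show "f i \<in> S \<longleftrightarrow> f j \<in> S" using fe clique_replace_no_crossing[of "f i" "f j" E S] by auto
  qed
  show False
  proof (cases "f 0 \<in> S")
    case True
    then have "f ` {0..<n} \<subseteq> S" using all by auto
    then have "card (f ` {0..<n}) \<le> card S" using fS card_mono by blast
    then show False using fi cS by (simp add: card_image)
  next
    case False
    have "f ` e \<in> E" if e: "e \<in> T1_edges n" for e
    proof -
      have "e \<subseteq> {0..<n}" "e \<noteq> {}" using e n by (auto simp: T1_edges_def)
      then have "f ` e \<inter> S = {}" "f ` e \<noteq> {}" using all False by fastforce+
      then show ?thesis using fe e by (auto simp: clique_replace_def)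
    qed
    then have "contains V E (T1_verts n) (T1_edges n)" using fi fim
      by (auto simp: contains_def T1_verts_def)
    then show False using nc by simp
  qed
qed

text \<open>Key property of extremal graphs: fewer than n vertices are met by at least as many
  edges as a clique on them has; otherwise the clique replacement would beat ex(p;T_n^1).\<close>
lemma extremal_touching:
  assumes n: "n \<ge> 5" and G: "in_Ex p (T1_verts n) (T1_edges n) V E"
    and SV: "S \<subseteq> V" and cS: "card S < n"
  shows "card S choose 2 \<le> card (touching E S)"
proof -
  have s: "sgraph V E" and nc: "\<not> contains V E (T1_verts n) (T1_edges n)"
    and cE: "card E = ex_num p (T1_verts n) (T1_edges n)" and cV: "card V = p"
    using G by (auto simp: in_Ex_def)
  have fS: "finite S" using s SV by (auto simp: sgraph_def intro: finite_subset)
  have "card (clique_replace E S) \<le> card E"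
    using ex_num_upper[OF clique_replace_sgraph[OF s SV] cV clique_replace_T1_free[OF n fS cS nc]]
      cE by simp
  then show ?thesis using card_clique_replace[OF s SV] by linarith
qed


lemma doubleton_other: "e = {a, b} \<Longrightarrow> a \<noteq> b \<Longrightarrow> s \<in> e \<Longrightarrow> \<exists>t. e = {s, t} \<and> t \<noteq> s"
  by auto

lemma two_set_meets_triangle:
  assumes h: "h = {h1, h2}" "h1 \<noteq> h2" and xy: "x \<noteq> y" and yz: "y \<noteq> z" and xz: "x \<noteq> z"
    and m: "h \<inter> {x, y} \<noteq> {}" "h \<inter> {y, z} \<noteq> {}" "h \<inter> {x, z} \<noteq> {}"
  shows "h \<in> {{x, y}, {y, z}, {x, z}}"
proof -
  have pair: "h = {a, b}" if "a \<in> h" "b \<in> h" "a \<noteq> b" for a b using h that by blast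
  show ?thesis
  proof (cases "x \<in> h")
    case True
    show ?thesis
    proof (cases "y \<in> h")
      case True then show ?thesis using pair \<open>x \<in> h\<close> xy by blast
    next
      case False
      then have "z \<in> h" using m(2) by blast
      then show ?thesis using pair \<open>x \<in> h\<close> xz by blast
    qed
  next
    case False
    then have "y \<in> h" "z \<in> h" using m(1,3) by blast+
    then show ?thesis using pair yz by blast
  qed
qed

lemma intersecting_two_sets:
  assumes two: "\<forall>e\<in>F. \<exists>x y. e = {x, y} \<and> x \<noteq> y" and int: "\<forall>e\<in>F. \<forall>f\<in>F. e \<inter> f \<noteq> {}"
  shows "(\<exists>c. \<forall>e\<in>F. c \<in> e) \<or> card F \<le> 3"
proof (cases "F = {}")
  case False
  then obtain e where e: "e \<in> F" by blast
  then obtain x y where xy: "e = {x, y}" "x \<noteq> y" using two by blast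
  then have e0: "{x, y} \<in> F" "x \<noteq> y" using e by simp_all
  show ?thesis
  proof (cases "(\<forall>e\<in>F. x \<in> e) \<or> (\<forall>e\<in>F. y \<in> e)")
    case False
    then obtain f g where f: "f \<in> F" "x \<notin> f" and g: "g \<in> F" "y \<notin> g" by blast
    have "{x, y} \<inter> f \<noteq> {}" "{x, y} \<inter> g \<noteq> {}" "f \<inter> g \<noteq> {}"
      using int[rule_format, OF e0(1) f(1)] int[rule_format, OF e0(1) g(1)]
        int[rule_format, OF f(1) g(1)] by simp_all
    then have "y \<in> f" "x \<in> g" using f(2) g(2) by auto
    obtain f1 f2 where "f = {f1, f2}" "f1 \<noteq> f2" using two f(1) by blast
    then obtain z where fz: "f = {y, z}" "z \<noteq> y" using doubleton_other \<open>y \<in> f\<close> by blast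
    obtain g1 g2 where "g = {g1, g2}" "g1 \<noteq> g2" using two g(1) by blast
    then obtain z' where gz: "g = {x, z'}" "z' \<noteq> x" using doubleton_other \<open>x \<in> g\<close> by blast
    have "z = z'" using \<open>f \<inter> g \<noteq> {}\<close> fz gz f(2) g(2) by auto
    have "F \<subseteq> {{x, y}, {y, z}, {x, z}}"
    proof
      fix h assume h: "h \<in> F"
      then obtain h1 h2 where hh: "h = {h1, h2}" "h1 \<noteq> h2" using two by blast
      have "h \<inter> {x, y} \<noteq> {}" "h \<inter> {y, z} \<noteq> {}" "h \<inter> {x, z} \<noteq> {}"
        using int[rule_format, OF h e0(1)] int[rule_format, OF h f(1)] int[rule_format, OF h g(1)]
          fz(1) gz(1) \<open>z = z'\<close> by simp_all
      moreover have "x \<noteq> z" using f(2) fz(1) by blast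
      ultimately show "h \<in> {{x, y}, {y, z}, {x, z}}"
        using two_set_meets_triangle[OF hh e0(2) fz(2)[symmetric]] by blast
    qed
    then have "card F \<le> card {{x, y}, {y, z}, {x, z}}" by (rule card_mono[rotated]) simp
    also have "\<dots> \<le> 3" by (simp add: card_insert_if)
    finally show ?thesis ..
  qed blast
qed simp

section \<open>The maximum degree of a connected extremal graph\<close>

lemma choose_two_Suc: "Suc m choose 2 = (m choose 2) + m"
  by (simp add: numeral_2_eq_2)

lemma choose_two_ge_linear: "m \<ge> 6 \<Longrightarrow> 2 * m + 2 \<le> m choose 2"
proof (induction m rule: dec_induct)
  case base then show ?case by (simp add: choose_two)
next
  case (step m) then show ?case by (simp add: choose_two_Suc)
qed

lemma choose_two_ge_triple: "d \<ge> 5 \<Longrightarrow> 3 * d \<le> Suc d choose 2"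
proof (induction d rule: dec_induct)
  case base then show ?case by (simp add: choose_two)
next
  case (step m) then show ?case by (simp add: choose_two_Suc)
qed

lemma card_le_of_cover: "X \<subseteq> A \<union> B \<Longrightarrow> finite A \<Longrightarrow> finite B \<Longrightarrow> card X \<le> card A + card B"
  by (meson card_Un_le card_mono finite_UnI order_trans)

locale extremal_max_vertex =
  fixes p n :: nat and V :: "'a set" and E :: "'a set set" and v :: 'a and d :: nat
  assumes n7: "n \<ge> 7" and extremal: "in_Ex p (T1_verts n) (T1_edges n) V E"
    and v: "v \<in> V" and dv: "degree E v = d" and dmax: "\<forall>u\<in>V. degree E u \<le> d"
begin

abbreviation N where "N \<equiv> neighbours E v"

lemma simple: "sgraph V E" using extremal by (simp add: in_Ex_def)
lemma T1_free: "\<not> contains V E (T1_verts n) (T1_edges n)" using extremal by (simp add: in_Ex_def)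
lemma finite_V: "finite V" using simple by (simp add: sgraph_def)
lemma finite_E: "finite E" using sgraph_finite_edges[OF simple] .
lemma N_sub_V: "N \<subseteq> V" using neighbours_subset[OF simple] .
lemma finite_N: "finite N" using N_sub_V finite_V finite_subset by blast
lemma v_notin_N: "v \<notin> N" using not_own_neighbour[OF simple] .
lemma card_N: "card N = d" using card_neighbours[OF simple] dv by simp
lemma nbr_edge: "u \<in> N \<Longrightarrow> {v, u} \<in> E" by (simp add: neighbours_def)
lemma edge_at_v: "e \<in> E \<Longrightarrow> v \<in> e \<Longrightarrow> \<exists>u\<in>N. e = {v, u}"
  using sgraph_other_end[OF simple] by (fastforce simp: neighbours_def)

lemma touching_lower: "S \<subseteq> V \<Longrightarrow> card S < n \<Longrightarrow> card S choose 2 \<le> card (touching E S)"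
  using extremal_touching[OF _ extremal] n7 by simp

lemma card_edges_at: "card {e \<in> E. c \<in> e} \<le> d"
  using dmax degree_outside[OF simple, of c] by (cases "c \<in> V") (auto simp: degree_def)

lemma card_edges_at_but: "{c, w} \<in> E \<Longrightarrow> card ({e \<in> E. c \<in> e} - {{c, w}}) \<le> d - 1"
  using card_edges_at[of c] card_Diff_singleton[of "{c, w}" "{e \<in> E. c \<in> e}"] by auto

lemma no_T1_at_v:
  assumes "a \<in> N" "b \<in> N" "{a, x} \<in> E" "{b, y} \<in> E" "distinct [v, a, b, x, y]"
    "card (N - {a, b, x, y}) \<ge> n - 5"
  shows False
  using T1_embedding[OF simple n7 v assms] T1_free by simp

lemma no_disjoint_exits:
  assumes a: "a \<in> N" and b: "b \<in> N" and ax: "{a, x} \<in> E" and by': "{b, y} \<in> E"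
    and ab: "a \<noteq> b" and xy: "x \<noteq> y" and xN: "x \<notin> N" "x \<noteq> v" and yN: "y \<notin> N" "y \<noteq> v"
    and d3: "d \<ge> n - 3"
  shows False
proof -
  have "N - {a, b, x, y} = N - {a, b}" using xN yN by auto
  moreover have "card (N - {a, b}) \<ge> d - 2"
    using diff_card_le_card_Diff[of "{a, b}" N] card_N card_insert_le_m1[of 2 "{b}" a] by simp
  ultimately have c: "card (N - {a, b, x, y}) \<ge> n - 5" using d3 by simp
  have "distinct [v, a, b, x, y]"
    using a b ab xy xN yN v_notin_N sgraph_edge_ends[OF simple ax] sgraph_edge_ends[OF simple by'] by auto
  then show False using no_T1_at_v[OF a b ax by' _ c] by blast
qed


subsection \<open>Maximum degree at least n - 1\<close>

definition outer_edges :: "'a set set" where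
  "outer_edges = {e \<in> E. v \<notin> e \<and> e \<inter> N \<noteq> {}}"

lemma outer_edge_shape:
  assumes e: "e \<in> outer_edges"
  shows "\<exists>a x. e = {a, x} \<and> a \<in> N \<and> x \<noteq> a \<and> x \<noteq> v \<and> {a, x} \<in> E"
proof -
  obtain a where a: "a \<in> e" "a \<in> N" using e by (auto simp: outer_edges_def)
  obtain x where x: "e = {a, x}" "x \<noteq> a"
    using sgraph_other_end[OF simple _ a(1)] e by (auto simp: outer_edges_def)
  have "x \<noteq> v" using e x by (auto simp: outer_edges_def)
  then show ?thesis using a x e by (auto simp: outer_edges_def)
qed

text \<open>Two disjoint outer edges together with n - 5 further neighbours of v would form
  T_n^1, so for d \<ge> n - 1 the outer edges pairwise intersect.\<close>
lemma outer_edges_intersecting: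
  assumes d1: "d \<ge> n - 1"
  shows "\<forall>e\<in>outer_edges. \<forall>f\<in>outer_edges. e \<inter> f \<noteq> {}"
proof (intro ballI notI)
  fix e f assume e: "e \<in> outer_edges" and f: "f \<in> outer_edges" and ef: "e \<inter> f = {}"
  obtain a x where ax: "e = {a, x}" "a \<in> N" "x \<noteq> a" "x \<noteq> v" "{a, x} \<in> E"
    using outer_edge_shape[OF e] by blast
  obtain b y where bya: "f = {b, y}" "b \<in> N" "y \<noteq> b" "y \<noteq> v" "{b, y} \<in> E"
    using outer_edge_shape[OF f] by blast
  have dist: "distinct [v, a, b, x, y]" using ax bya ef v_notin_N by auto
  have "card {a, b, x, y} \<le> 4" using card_length[of "[a, b, x, y]"] by simp
  then have "card (N - {a, b, x, y}) \<ge> n - 5"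
    using diff_card_le_card_Diff[of "{a, b, x, y}" N] card_N d1 by simp
  then show False using no_T1_at_v[OF ax(2) bya(2) ax(5) bya(5) dist] by blast
qed

lemma many_touching:
  assumes "S \<subseteq> V" "card S = n - 1"
  shows "card (touching E S) \<ge> 2 * (n - 1) + 2"
proof -
  have "2 * (n - 1) + 2 \<le> (n - 1) choose 2" using choose_two_ge_linear n7 by simp
  moreover have "card S < n" using assms(2) n7 by simp
  ultimately show ?thesis using touching_lower[OF assms(1)] assms(2) by simp
qed

lemma touching_nbhd:
  assumes "S \<subseteq> N"
  shows "touching E S \<subseteq> (\<lambda>s. {v, s}) ` S \<union> outer_edges"
proof
  fix e assume e: "e \<in> touching E S"
  then obtain s where se: "s \<in> e \<inter> S" by (auto simp: touching_def)
  show "e \<in> (\<lambda>s. {v, s}) ` S \<union> outer_edges"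
  proof (cases "v \<in> e")
    case True
    then obtain u where "u \<in> N" "e = {v, u}" using edge_at_v e by (auto simp: touching_def)
    then have "e = {v, s}" using se assms v_notin_N by auto
    then show ?thesis using se by auto
  next
    case False
    then show ?thesis using e assms by (auto simp: touching_def outer_edges_def)
  qed
qed

text \<open>At most three outer edges: n - 1 neighbours of v are met by at most n + 2 edges.\<close>
lemma dense_few_outer:
  assumes d1: "d \<ge> n - 1" and c3: "card outer_edges \<le> 3"
  shows False
proof -
  obtain S where S: "S \<subseteq> N" "card S = n - 1" "finite S"
    using obtain_subset_with_card_n[of "n - 1" N] card_N d1 by auto
  have "card (touching E S) \<le> card ((\<lambda>s. {v, s}) ` S) + card outer_edges"
    using touching_nbhd[OF S(1)] by (rule card_le_of_cover) (simp_all add: S(3) finite_E outer_edges_def)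
  also have "\<dots> \<le> (n - 1) + 3" using card_image_le[OF S(3), of "\<lambda>s. {v, s}"] S(2) c3 by linarith
  moreover have "S \<subseteq> V" using S(1) N_sub_V by blast
  ultimately show False using many_touching[OF _ S(2)] n7 by fastforce
qed

text \<open>If all outer edges pass through one vertex c, choose n - 1 neighbours of v
  (avoiding c if possible): they are met only by spokes at v and edges at c.\<close>
lemma dense_outer_star_avoiding:
  assumes d1: "d \<ge> n - 1" and c: "\<forall>e\<in>outer_edges. c \<in> e" and avoid: "c \<notin> N \<or> d \<ge> n"
  shows False
proof -
  have "card (N - {c}) \<ge> n - 1"
    using avoid card_N d1 card_Diff_singleton[of c N] by (cases "c \<in> N") auto
  then obtain S where S: "S \<subseteq> N - {c}" "card S = n - 1" "finite S"
    using obtain_subset_with_card_n[of "n - 1" "N - {c}"] by auto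
  have "touching E S \<subseteq> (\<lambda>s. {v, s}) ` S \<union> (\<lambda>s. {c, s}) ` S"
  proof
    fix e assume e: "e \<in> touching E S"
    then obtain s where se: "s \<in> e" "s \<in> S" by (auto simp: touching_def)
    have "S \<subseteq> N" using S(1) by blast
    then have "e \<in> (\<lambda>s. {v, s}) ` S \<union> outer_edges" using touching_nbhd e by blast
    moreover have "e = {c, s}" if "e \<in> outer_edges"
    proof -
      obtain t where "e = {s, t}" using sgraph_other_end[OF simple _ se(1)] e by (auto simp: touching_def)
      moreover have "c \<in> e" "c \<noteq> s" using c that se S(1) by auto
      ultimately show ?thesis by auto
    qed
    ultimately show "e \<in> (\<lambda>s. {v, s}) ` S \<union> (\<lambda>s. {c, s}) ` S" using se by blast
  qed
  then have "card (touching E S) \<le> card ((\<lambda>s. {v, s}) ` S) + card ((\<lambda>s. {c, s}) ` S)"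
    by (rule card_le_of_cover) (simp_all add: S(3))
  also have "\<dots> \<le> (n - 1) + (n - 1)"
    using card_image_le[OF S(3), of "\<lambda>s. {v, s}"] card_image_le[OF S(3), of "\<lambda>s. {c, s}"] S(2)
    by linarith
  moreover have "S \<subseteq> V" using S(1) N_sub_V by blast
  ultimately show False using many_touching[OF _ S(2)] n7 by fastforce
qed

text \<open>If d = n - 1 and all outer edges pass through a neighbour c, take v together with
  the other n - 2 neighbours: only edges at v or at c meet them.\<close>
lemma dense_outer_star_inside:
  assumes dn: "d = n - 1" and card_N': "c \<in> N" and c: "\<forall>e\<in>outer_edges. c \<in> e"
  shows False
proof -
  define S where "S = insert v (N - {c})"
  have cS: "card S = n - 1" using card_N' card_N dn v_notin_N finite_N n7 by (simp add: S_def card_Diff_singleton)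
  have SV: "S \<subseteq> V" using N_sub_V v by (auto simp: S_def)
  have "touching E S \<subseteq> {e \<in> E. v \<in> e} \<union> ({e \<in> E. c \<in> e} - {{c, v}})"
  proof
    fix e assume e: "e \<in> touching E S"
    show "e \<in> {e \<in> E. v \<in> e} \<union> ({e \<in> E. c \<in> e} - {{c, v}})"
    proof (cases "v \<in> e")
      case False
      then have "e \<in> outer_edges" using e by (auto simp: S_def touching_def outer_edges_def)
      then show ?thesis using c False e by (auto simp: touching_def)
    qed (use e in \<open>auto simp: touching_def\<close>)
  qed
  moreover have "finite {e \<in> E. v \<in> e}" "finite ({e \<in> E. c \<in> e} - {{c, v}})" using finite_E by simp_all
  ultimately have "card (touching E S) \<le> card {e \<in> E. v \<in> e} + card ({e \<in> E. c \<in> e} - {{c, v}})"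
    by (rule card_le_of_cover)
  also have "\<dots> \<le> d + (d - 1)"
  proof -
    have "{c, v} \<in> E" using nbr_edge[OF card_N'] by (simp add: insert_commute)
    then show ?thesis using card_edges_at[of v] card_edges_at_but[of c v] by linarith
  qed
  finally show False using many_touching[OF SV cS] dn n7 by linarith
qed

text \<open>For d \<ge> n - 1 the outer edges form a star or a triangle; every case yields n - 1
  vertices met by too few edges.\<close>
lemma max_degree_below_n_minus_1: "d < n - 1"
proof (rule ccontr)
  assume "\<not> d < n - 1"
  then have d1: "d \<ge> n - 1" by simp
  have "\<forall>e\<in>outer_edges. \<exists>x y. e = {x, y} \<and> x \<noteq> y"
    using outer_edge_shape by blast
  then consider c where "\<forall>e\<in>outer_edges. c \<in> e" | "card outer_edges \<le> 3"
    using intersecting_two_sets outer_edges_intersecting[OF d1] by blast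
  then show False
  proof cases
    case (1 c)
    show False
    proof (cases "c \<notin> N \<or> d \<ge> n")
      case True then show False using dense_outer_star_avoiding[OF d1 1] by blast
    next
      case False
      then have "c \<in> N" "d = n - 1" using d1 by auto
      then show False using dense_outer_star_inside 1 by blast
    qed
  next
    case 2 then show False using dense_few_outer[OF d1] by blast
  qed
qed


subsection \<open>Maximum degree n - 2 or n - 3\<close>

definition exit_edges :: "'a set set" where
  "exit_edges = {e \<in> E. v \<notin> e \<and> e \<inter> N \<noteq> {} \<and> \<not> e \<subseteq> N}"

lemma exit_edge_shape:
  assumes e: "e \<in> exit_edges"
  shows "\<exists>b y. e = {b, y} \<and> b \<in> N \<and> y \<notin> N \<and> y \<noteq> v \<and> {b, y} \<in> E"
proof -
  obtain b where b: "b \<in> e" "b \<in> N" using e by (auto simp: exit_edges_def)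
  obtain y where y: "e = {b, y}" "y \<noteq> b"
    using sgraph_other_end[OF simple _ b(1)] e by (auto simp: exit_edges_def)
  have "y \<notin> N" "y \<noteq> v" using e y b by (auto simp: exit_edges_def)
  then show ?thesis using b y e by (auto simp: exit_edges_def)
qed

lemma exit_edge_exists:
  assumes conn: "connected_graph V E" and big: "card (insert v N) < card V"
  shows "\<exists>a x. a \<in> N \<and> {a, x} \<in> E \<and> x \<notin> N \<and> x \<noteq> v"
proof -
  have sub: "insert v N \<subseteq> V" using N_sub_V v by auto
  have "\<not> V \<subseteq> insert v N" using big by (meson card_mono finite_N finite_insert leD)
  then obtain w where w: "w \<in> V" "w \<notin> insert v N" by blast
  obtain a x where ax: "{a, x} \<in> E" "a \<in> insert v N" "x \<notin> insert v N"
    using connected_graph_crossing_edge[OF conn _ sub w, of v] by blast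
  have "a \<noteq> v" using ax by (auto simp: neighbours_def)
  then show ?thesis using ax by blast
qed

text \<open>For d \<ge> n - 3, all exit edges pass through one end of any given exit edge a x:
  two disjoint exit edges would create T_n^1.\<close>
lemma exit_edges_star:
  assumes d3: "d \<ge> n - 3" and a: "a \<in> N" and ax: "{a, x} \<in> E" and xN: "x \<notin> N" "x \<noteq> v"
  shows "(\<forall>e\<in>exit_edges. a \<in> e) \<or> (\<forall>e\<in>exit_edges. x \<in> e)"
proof (rule ccontr)
  assume "\<not> ((\<forall>e\<in>exit_edges. a \<in> e) \<or> (\<forall>e\<in>exit_edges. x \<in> e))"
  then obtain e1 e2 where e1: "e1 \<in> exit_edges" "a \<notin> e1" and e2: "e2 \<in> exit_edges" "x \<notin> e2"
    by blast
  obtain b y where b: "e1 = {b, y}" "b \<in> N" "y \<notin> N" "y \<noteq> v" "{b, y} \<in> E"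
    using exit_edge_shape[OF e1(1)] by blast
  obtain b' y' where b': "e2 = {b', y'}" "b' \<in> N" "y' \<notin> N" "y' \<noteq> v" "{b', y'} \<in> E"
    using exit_edge_shape[OF e2(1)] by blast
  have ab: "a \<noteq> b" and xy': "x \<noteq> y'" using b e1 b' e2 by auto
  have yx: "y = x" using no_disjoint_exits[OF a b(2) ax b(5) ab _ xN b(3,4) d3] by auto
  have ab': "b' = a" using no_disjoint_exits[OF a b'(2) ax b'(5) _ xy' xN b'(3,4) d3] by auto
  have "{b, x} \<in> E" "{a, y'} \<in> E" using b yx b' ab' by auto
  then show False using no_disjoint_exits[OF b(2) a _ _ _ xy' xN b'(3,4) d3] ab by auto
qed

text \<open>For d = n - 2, every edge inside N passes through the end a of an exit edge a x:
  otherwise v, a, x and the edge b y inside N would create T_n^1.\<close>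
lemma inner_edges_through_exit:
  assumes d2: "d = n - 2" and a: "a \<in> N" and ax: "{a, x} \<in> E" and xN: "x \<notin> N" "x \<noteq> v"
    and e: "e \<in> E" "e \<subseteq> N"
  shows "a \<in> e"
proof (rule ccontr)
  assume ae: "a \<notin> e"
  obtain b y where by': "e = {b, y}" "b \<noteq> y" using sgraph_edge[OF simple e(1)] by blast
  have bN: "b \<in> N" "y \<in> N" using by' e by auto
  have dist: "distinct [v, a, b, x, y]" using by' bN a xN ae v_notin_N by auto
  have "card {a, b, y} \<le> 3" using card_length[of "[a, b, y]"] by simp
  then have "card (N - {a, b, y}) \<ge> d - 3"
    using diff_card_le_card_Diff[of "{a, b, y}" N] card_N by simp
  moreover have "N - {a, b, x, y} = N - {a, b, y}" using xN by auto
  ultimately have "card (N - {a, b, x, y}) \<ge> n - 5" using d2 by simp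
  moreover have "{b, y} \<in> E" using e by' by simp
  ultimately show False using no_T1_at_v[OF a bN(1) ax _ dist] by blast
qed

text \<open>For d = n - 2, the edges meeting N \<union> {v} lie at v, inside N (hence at a), or are
  exit edges (hence at the common vertex c of all exit edges).\<close>
lemma touching_closed_nbhd:
  assumes d2: "d = n - 2" and ax: "a \<in> N" "{a, x} \<in> E" "x \<notin> N" "x \<noteq> v"
    and c: "\<forall>e\<in>exit_edges. c \<in> e"
  shows "card (touching E (insert v N)) \<le> d + (d - 1) + d"
proof -
  let ?at = "\<lambda>c. {e \<in> E. c \<in> e}"
  have "touching E (insert v N) \<subseteq> ?at v \<union> (?at a - {{a, v}}) \<union> ?at c"
  proof
    fix e assume e: "e \<in> touching E (insert v N)"
    show "e \<in> ?at v \<union> (?at a - {{a, v}}) \<union> ?at c"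
    proof (cases "v \<in> e")
      case False
      then have meet: "e \<inter> N \<noteq> {}" using e by (auto simp: touching_def)
      show ?thesis
      proof (cases "e \<subseteq> N")
        case True then show ?thesis
          using inner_edges_through_exit[OF d2 ax, of e] e False by (auto simp: touching_def)
      next
        case nf: False
        then have "e \<in> exit_edges" using e False meet by (auto simp: exit_edges_def touching_def)
        then show ?thesis using c e by (auto simp: touching_def)
      qed
    qed (use e in \<open>auto simp: touching_def\<close>)
  qed
  then have "card (touching E (insert v N)) \<le> card (?at v \<union> (?at a - {{a, v}}) \<union> ?at c)"
    by (rule card_mono[rotated]) (use finite_E in auto)
  also have "\<dots> \<le> card (?at v) + card (?at a - {{a, v}}) + card (?at c)"
    by (meson card_Un_le add_le_mono order_trans le_refl)
  also have "\<dots> \<le> d + (d - 1) + d"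
  proof -
    have "{a, v} \<in> E" using nbr_edge[OF ax(1)] by (simp add: insert_commute)
    then show ?thesis using card_edges_at[of v] card_edges_at_but[of a v] card_edges_at[of c] by linarith
  qed
  finally show ?thesis .
qed

text \<open>For d = n - 2 the set N \<union> {v} of d + 1 \<ge> 6 vertices would need 3d edges.\<close>
lemma max_degree_not_n_minus_2:
  assumes conn: "connected_graph V E" and cV: "card V \<ge> n" and d2: "d = n - 2"
  shows False
proof -
  define S where "S = insert v N"
  have cS: "card S = Suc d" using card_N v_notin_N finite_N d2 n7 by (simp add: S_def)
  obtain a x where ax: "a \<in> N" "{a, x} \<in> E" "x \<notin> N" "x \<noteq> v"
    using exit_edge_exists[OF conn] cS cV d2 n7 by (fastforce simp: S_def)
  obtain c where c: "\<forall>e\<in>exit_edges. c \<in> e"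
    using exit_edges_star[OF _ ax] d2 by fastforce
  have SV: "S \<subseteq> V" using N_sub_V v by (auto simp: S_def)
  have "Suc d choose 2 \<le> card (touching E S)" using touching_lower[OF SV] cS d2 n7 by simp
  moreover have "3 * d \<le> Suc d choose 2" using choose_two_ge_triple[of d] d2 n7 by simp
  ultimately show False using touching_closed_nbhd[OF d2 ax c] d2 n7 by (simp add: S_def)
qed

lemma touching_exits_through_neighbour:
  assumes a: "a \<in> N" and ax: "{a, x} \<in> E" and ca: "\<forall>e\<in>exit_edges. a \<in> e"
  shows "card (touching E (insert x (insert v N))) \<le> d + ((d - 1) choose 2) + (d - 1) + (d - 1)"
proof -
  let ?S = "insert x (insert v N)"
  let ?at = "\<lambda>c. {e \<in> E. c \<in> e}"
  have "touching E ?S \<subseteq> ?at v \<union> {e \<in> E. e \<subseteq> N - {a}} \<union> (?at a - {{a, v}}) \<union> (?at x - {{x, a}})"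
  proof
    fix e assume e: "e \<in> touching E ?S"
    show "e \<in> ?at v \<union> {e \<in> E. e \<subseteq> N - {a}} \<union> (?at a - {{a, v}}) \<union> (?at x - {{x, a}})"
    proof (cases "v \<in> e \<or> a \<in> e \<or> x \<in> e")
      case False
      then have "e \<inter> N \<noteq> {}" using e by (auto simp: touching_def)
      then have "e \<subseteq> N" using ca e False by (auto simp: exit_edges_def touching_def)
      then show ?thesis using e False by (auto simp: touching_def)
    qed (use e in \<open>auto simp: touching_def\<close>)
  qed
  then have "card (touching E ?S) \<le>
      card (?at v \<union> {e \<in> E. e \<subseteq> N - {a}} \<union> (?at a - {{a, v}}) \<union> (?at x - {{x, a}}))"
    by (rule card_mono[rotated]) (use finite_E in auto)
  also have "\<dots> \<le> card (?at v) + card {e \<in> E. e \<subseteq> N - {a}} + card (?at a - {{a, v}})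
      + card (?at x - {{x, a}})"
    by (meson card_Un_le add_le_mono order_trans le_refl)
  also have "\<dots> \<le> d + ((d - 1) choose 2) + (d - 1) + (d - 1)"
  proof -
    have "{a, v} \<in> E" "{x, a} \<in> E" using nbr_edge[OF a] ax by (simp_all add: insert_commute)
    moreover have "card {e \<in> E. e \<subseteq> N - {a}} \<le> (d - 1) choose 2"
    proof -
      have "N - {a} \<subseteq> V" using N_sub_V by blast
      then show ?thesis using card_edges_within[OF simple, of "N - {a}"] card_N a by (simp add: card_Diff_singleton)
    qed
    ultimately show ?thesis
      using card_edges_at[of v] card_edges_at_but[of a v] card_edges_at_but[of x a] by linarith
  qed
  finally show ?thesis .
qed

lemma touching_exits_through_outside:
  assumes cx: "\<forall>e\<in>exit_edges. x \<in> e"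
  shows "card (touching E (insert x (insert v N))) \<le> d + (d choose 2) + d"
proof -
  let ?S = "insert x (insert v N)"
  let ?at = "\<lambda>c. {e \<in> E. c \<in> e}"
  have "touching E ?S \<subseteq> ?at v \<union> {e \<in> E. e \<subseteq> N} \<union> ?at x"
  proof
    fix e assume e: "e \<in> touching E ?S"
    show "e \<in> ?at v \<union> {e \<in> E. e \<subseteq> N} \<union> ?at x"
    proof (cases "v \<in> e \<or> x \<in> e")
      case False
      then have "e \<inter> N \<noteq> {}" using e by (auto simp: touching_def)
      then have "e \<subseteq> N" using cx e False by (auto simp: exit_edges_def touching_def)
      then show ?thesis using e by (auto simp: touching_def)
    qed (use e in \<open>auto simp: touching_def\<close>)
  qed
  then have "card (touching E ?S) \<le> card (?at v \<union> {e \<in> E. e \<subseteq> N} \<union> ?at x)"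
    by (rule card_mono[rotated]) (use finite_E in auto)
  also have "\<dots> \<le> card (?at v) + card {e \<in> E. e \<subseteq> N} + card (?at x)"
    by (meson card_Un_le add_le_mono order_trans le_refl)
  also have "\<dots> \<le> d + (d choose 2) + d"
    using card_edges_within[OF simple N_sub_V] card_N card_edges_at[of v] card_edges_at[of x] by simp
  finally show ?thesis .
qed

text \<open>For d = n - 3 the set N \<union> {v, x} of d + 2 vertices would need
  (d + 2) choose 2 edges, more than either count allows.\<close>
lemma max_degree_not_n_minus_3:
  assumes conn: "connected_graph V E" and cV: "card V \<ge> n" and d3: "d = n - 3"
  shows False
proof -
  have "card (insert v N) = n - 2" using card_N v_notin_N finite_N d3 n7 by simp
  then obtain a x where ax: "a \<in> N" "{a, x} \<in> E" "x \<notin> N" "x \<noteq> v"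
    using exit_edge_exists[OF conn] cV n7 by fastforce
  define S where "S = insert x (insert v N)"
  have cS: "card S = Suc (Suc d)" using card_N v_notin_N finite_N ax d3 n7 by (simp add: S_def)
  have SV: "S \<subseteq> V" using N_sub_V v sgraph_edge_ends[OF simple ax(2)] by (auto simp: S_def)
  have lower: "card S choose 2 \<le> card (touching E S)" using touching_lower[OF SV] cS d3 n7 by simp
  have ch: "card S choose 2 = (d choose 2) + d + Suc d" using cS by (simp add: choose_two_Suc)
  have "d \<ge> n - 3" using d3 by simp
  from exit_edges_star[OF this ax] show False
  proof
    assume "\<forall>e\<in>exit_edges. a \<in> e"
    moreover have "d choose 2 = ((d - 1) choose 2) + (d - 1)"
      using choose_two_Suc[of "d - 1"] d3 n7 by (simp add: Suc_diff_le[symmetric])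
    ultimately show False
      using touching_exits_through_neighbour[OF ax(1,2)] lower ch by (simp add: S_def)
  next
    assume "\<forall>e\<in>exit_edges. x \<in> e"
    then have "card (touching E S) \<le> d + (d choose 2) + d"
      using touching_exits_through_outside by (simp add: S_def)
    then show False using lower ch by linarith
  qed
qed

lemma max_degree_le:
  assumes conn: "connected_graph V E" and cV: "card V \<ge> n"
  shows "d \<le> n - 4"
proof (rule ccontr)
  assume "\<not> d \<le> n - 4"
  then have "d = n - 2 \<or> d = n - 3" using max_degree_below_n_minus_1 by linarith
  then show False
    using max_degree_not_n_minus_2[OF conn cV] max_degree_not_n_minus_3[OF conn cV] by blast
qed

end

lemma degree_edge_squeeze:
  fixes e p D k :: nat
  assumes hs: "2 * e \<le> p * D" and D: "D \<le> k" and lb: "k * p div 2 \<le> e" and p: "2 \<le> p"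
  shows "D = k \<and> e = k * p div 2"
proof -
  have "p * D \<le> k * p" using D by (simp add: mult.commute)
  then have e: "e = k * p div 2" using hs lb by linarith
  have "D = k"
  proof (rule ccontr)
    assume "D \<noteq> k"
    then have "p * D + p \<le> k * p" using D by (metis Suc_leI add.commute le_neq_implies_less
          mult.commute mult_Suc_right mult_le_mono2)
    then show False using hs e p by linarith
  qed
  then show ?thesis using e by simp
qed

theorem lemma2p2:
  fixes p n :: nat and V :: "'a set" and E :: "'a set set"
  assumes "n \<ge> 7" and "p \<ge> n"
    and "in_Ex p (T1_verts n) (T1_edges n) V E"
    and "connected_graph V E"
  shows "max_degree V E = n - 4 \<and> card E = ((n - 4) * p) div 2"
proof -
  have s: "sgraph V E" and cV: "card V = p"
    and cE: "card E = ex_num p (T1_verts n) (T1_edges n)" using assms(3) by (auto simp: in_Ex_def)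
  then have "V \<noteq> {}" using assms(1,2) by auto
  then obtain v where "v \<in> V" "degree E v = max_degree V E"
    using max_degree_attained[OF s] by blast
  then interpret extremal_max_vertex p n V E v "max_degree V E"
    using assms(1,3) degree_le_max_degree[OF s] by unfold_locales auto
  have "max_degree V E \<le> n - 4" using max_degree_le[OF assms(4)] cV assms(2) by simp
  moreover have "2 * card E \<le> p * max_degree V E" using edges_le_max_degree[OF s] cV by simp
  moreover have "(n - 4) * p div 2 \<le> card E" using ex_num_lower[OF assms(1,2)] cE by simp
  ultimately show ?thesis using degree_edge_squeeze assms(1,2) by simp
qed

end
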